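(* For $n\ge1$ and $\beta\ge0$ let $Z_{n,\beta}=\int_{\mathbb{R}^n}\exp(-\frac12\sum_{i=1}^n\lambda_i^2)\prod_{1\le i<j\le n}|\lambda_i-\lambda_j|^\beta\,\mathrm{d}\lambda_1\cdots\mathrm{d}\lambda_n$. Let $\beta=\beta_n\ge0$ and $\beta'=\beta'_n>0$ be sequences. (i) If $\beta\ll\beta'\ll n^{-2}$, then $Z_{n,\beta'}/Z_{n,\beta}\to1$ as $n\to\infty$. (ii) If $\beta\ll\beta'\ll n^{-1}$ and $\beta'\gg n^{-2}$, then $Z_{n,\beta'}\ll Z_{n,\beta}$.
   Context: For sequences $u=u_n$, $v=v_n$, $u\ll v$ means $u_n/v_n\to 0$ as $n\to\infty$ (and $u\gg v$ means $v\ll u$). In (i), when $\beta=0$ the condition $\beta\ll\beta'$ is understood trivially. *)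

theory Defs
  imports "HOL-Probability.Probability"
begin

text \<open>|x|^b with the convention 0^0 = 1 (Isabelle's powr has 0 powr 0 = 0).\<close>
definition abs_pow :: "real \<Rightarrow> real \<Rightarrow> real" where
  "abs_pow x b = (if b = 0 then 1 else \<bar>x\<bar> powr b)"

definition Zconst :: "nat \<Rightarrow> real \<Rightarrow> real" where
  "Zconst n \<beta> = integral\<^sup>L (PiM {..<n} (\<lambda>_. lborel))
     (\<lambda>x. exp (- (1/2) * (\<Sum>i<n. (x i)\<^sup>2)) *
          (\<Prod>p\<in>{(i,j). i < j \<and> j < n}. abs_pow (x (fst p) - x (snd p)) \<beta>))"

end

theory Submission
  imports Defs "HOL-Real_Asymp.Real_Asymp" "HOL-Number_Theory.Cong"
begin

text \<open>Reading the Gaussian weight as the density of a standard Gaussian vector \<open>X\<close> gives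
  \<open>Z(n, \<beta>) = (2\<pi>)\<^bsup>n/2\<^esup> E \<Prod>\<^sub>i\<^sub><\<^sub>j |X\<^sub>i - X\<^sub>j|\<^sup>\<beta>\<close>. Every difference \<open>X\<^sub>i - X\<^sub>j\<close> is
  \<open>N(0, 2)\<close>, with absolute moments \<open>m(t) = 2\<^sup>t \<Gamma>((t+1)/2) / \<surd>\<pi>\<close>.

  Lower bound: \<open>ln u \<ge> 2 (1 - u\<^bsup>-1/2\<^esup>)\<close> and Jensen's inequality give
  \<open>E \<ge> exp (-C \<beta> n\<^sup>2)\<close>.

  Upper bound: the pairs \<open>i < j\<close> split into the \<open>n\<close> classes \<open>i + j \<equiv> k (mod n)\<close>; each is a
  matching with at least \<open>(n - 2)/2\<close> pairs, so its factors are independent. AM-GM over the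
  classes bounds \<open>E\<close> by an average of \<open>m(n\<beta>)\<^bsup>#class\<^esup>\<close>. Since \<open>t \<mapsto> |x|\<^sup>t\<close> is convex,
  \<open>m\<close> lies below its chords from \<open>m(0) = 1\<close>; as \<open>m'(0) = -\<gamma>/2 < 0\<close> this gives
  \<open>m(n\<beta>) \<le> 1 - c n\<beta>\<close> for small \<open>n\<beta>\<close>, while \<open>m(n\<beta>) \<le> 1 + C' n\<beta>\<close> for all \<open>n\<beta> \<le> 1\<close>.
  Hence \<open>E \<rightarrow> 1\<close> when \<open>\<beta> n\<^sup>2 \<rightarrow> 0\<close>, and \<open>E \<le> exp (-c' \<beta> n\<^sup>2)\<close> when \<open>n\<beta> \<rightarrow> 0\<close>.\<close>

lemma Gamma_set_integral_real:
  fixes s :: real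
  assumes "s > 0"
  shows "set_integrable lborel {0<..} (\<lambda>u. u powr (s - 1) / exp u)"
    and "(LINT u:{0<..}|lborel. u powr (s - 1) / exp u) = Gamma s"
proof -
  have "((\<lambda>u. u powr (s - 1) / exp u) has_integral Gamma s) {0..}"
    using Gamma_integral_real[OF assms] .
  then have "((\<lambda>u. if u \<in> {0<..} then u powr (s - 1) / exp u else 0) has_integral Gamma s) {0..}"
    by (rule has_integral_spike [of "{0}", rotated 2]) auto
  then have has_int: "((\<lambda>u. u powr (s - 1) / exp u) has_integral Gamma s) {0<..}"
    by (subst (asm) has_integral_restrict) auto
  then have "(\<lambda>u. u powr (s - 1) / exp u) absolutely_integrable_on {0<..}"
    by (intro nonnegative_absolutely_integrable_1) auto
  then show int: "set_integrable lborel {0<..} (\<lambda>u. u powr (s - 1) / exp u)"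
    unfolding set_integrable_def by (subst (asm) integrable_completion) auto
  show "(LINT u:{0<..}|lborel. u powr (s - 1) / exp u) = Gamma s"
    using set_borel_integral_eq_integral(2)[OF int] has_int by (simp add: integral_unique)
qed

lemma powr_gaussian_sqrt_subst:
  fixes t u :: real
  assumes "u > 0"
  shows "(2 * sqrt u) powr t * exp (- (2 * sqrt u)\<^sup>2 / 4) * (1 / sqrt u)
    = 2 powr t * (u powr ((t + 1) / 2 - 1) / exp u)"
proof -
  have "(2 * sqrt u) powr t = 2 powr t * u powr (t / 2)"
    using assms by (simp add: powr_mult sqrt_def root_powr_inverse powr_powr)
  then have "(2 * sqrt u) powr t * exp (- (2 * sqrt u)\<^sup>2 / 4) * (1 / sqrt u)
      = 2 powr t * u powr (t / 2) * exp (- u) / u powr (1 / 2)"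
    using assms by (simp add: power_mult_distrib powr_half_sqrt)
  also have "\<dots> = 2 powr t * (u powr (t / 2) / u powr (1 / 2)) / exp u"
    by (simp add: exp_minus field_simps)
  also have "u powr (t / 2) / u powr (1 / 2) = u powr ((t + 1) / 2 - 1)"
    using assms by (simp add: powr_diff [symmetric] field_simps)
  finally show ?thesis
    by simp
qed

lemma set_integral_powr_gaussian:
  fixes t :: real
  assumes t: "t > -1"
  shows "set_integrable lborel {0<..} (\<lambda>y. y powr t * exp (- y\<^sup>2 / 4))"
    and "(LINT y:{0<..}|lborel. y powr t * exp (- y\<^sup>2 / 4)) = 2 powr t * Gamma ((t + 1) / 2)"
proof -
  define f where "f = (\<lambda>y::real. y powr t * exp (- y\<^sup>2 / 4))"
  define g where "g u = 2 * sqrt u" for u :: real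
  define g' where "g' u = 1 / sqrt u" for u :: real
  define G where "G u = 2 powr t * (u powr ((t + 1) / 2 - 1) / exp u)" for u :: real
  have s: "(t + 1) / 2 > 0"
    using t by simp
  have subst_eq: "f (g u) * g' u = G u" if "u > 0" for u
    using powr_gaussian_sqrt_subst[OF that, of t] by (simp only: f_def g_def g'_def G_def)
  have G_int: "set_integrable lborel {0<..} G"
    unfolding G_def using Gamma_set_integral_real(1)[OF s] by (rule set_integrable_mult_right)
  have "set_integrable lborel {0<..} (\<lambda>u. f (g u) * g' u)"
    using G_int set_integrable_cong[of lborel lborel "{0<..}" "{0<..}" "\<lambda>u. f (g u) * g' u" G]
    by (simp add: subst_eq)
  then have int: "set_integrable lborel (einterval 0 \<infinity>) (\<lambda>u. f (g u) * g' u)"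
    by (simp add: zero_ereal_def)
  have deriv: "DERIV g x :> g' x" if "0 < ereal x" for x
    using that unfolding g_def g'_def by (auto intro!: derivative_eq_intros simp: field_simps)
  have lim0: "((ereal \<circ> g \<circ> real_of_ereal) \<longlongrightarrow> 0) (at_right 0)"
    unfolding zero_ereal_def ereal_tendsto_simps g_def by real_asymp
  have lim_inf: "((ereal \<circ> g \<circ> real_of_ereal) \<longlongrightarrow> \<infinity>) (at_left \<infinity>)"
    unfolding ereal_tendsto_simps g_def by real_asymp
  have "isCont f (g x)" "isCont g' x" if "0 < ereal x" for x
    using that unfolding f_def g_def g'_def by (auto intro!: continuous_intros simp: zero_ereal_def)
  with interval_integral_substitution_nonneg[of 0 \<infinity> g g' f, OF _ deriv _ _ _ _ lim0 lim_inf int]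
  have "set_integrable lborel (einterval 0 \<infinity>) f"
    and substitution: "(LBINT y=0..\<infinity>. f y) = (LBINT u=0..\<infinity>. f (g u) * g' u)"
    by (auto simp: f_def g'_def)
  then show "set_integrable lborel {0<..} (\<lambda>y. y powr t * exp (- y\<^sup>2 / 4))"
    by (simp add: f_def zero_ereal_def)
  have "(LBINT u=0..\<infinity>. f (g u) * g' u) = (LINT u:{0<..}|lborel. G u)"
    unfolding interval_lebesgue_integral_def
    by (simp add: zero_ereal_def, intro set_lebesgue_integral_cong) (auto simp: subst_eq)
  also have "\<dots> = 2 powr t * Gamma ((t + 1) / 2)"
    unfolding G_def using Gamma_set_integral_real(2)[OF s]
    by (simp only: set_integral_mult_right)
  finally show "(LINT y:{0<..}|lborel. y powr t * exp (- y\<^sup>2 / 4)) = 2 powr t * Gamma ((t + 1) / 2)"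
    using substitution unfolding interval_lebesgue_integral_def by (simp add: f_def zero_ereal_def)
qed

lemma abs_pow_nonneg [simp]: "abs_pow x b \<ge> 0"
  by (simp add: abs_pow_def)

lemma borel_measurable_abs_pow [measurable]: "(\<lambda>x. abs_pow x b) \<in> borel_measurable borel"
  unfolding abs_pow_def by measurable

lemma abs_pow_eq_exp: "x \<noteq> 0 \<Longrightarrow> abs_pow x b = exp (b * ln \<bar>x\<bar>)"
  by (simp add: abs_pow_def powr_def)

lemma abs_pow_power: "b \<ge> 0 \<Longrightarrow> abs_pow x b ^ n = abs_pow x (real n * b)"
  by (cases "x = 0") (auto simp: abs_pow_def powr_power)

lemma abs_pow_le_chord:
  assumes "0 \<le> t" "t \<le> s" "0 < s"
  shows "abs_pow x t \<le> (1 - t / s) + t / s * abs_pow x s"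
proof (cases "t = 0 \<or> x = 0")
  case True
  then show ?thesis
    using assms by (auto simp: abs_pow_def)
next
  case False
  have "exp ((1 - t / s) *\<^sub>R 0 + (t / s) *\<^sub>R (s * ln \<bar>x\<bar>))
      \<le> (1 - t / s) * exp 0 + t / s * exp (s * ln \<bar>x\<bar>)"
    using assms by (intro convex_onD[OF exp_convex]) auto
  then show ?thesis
    using False assms by (simp add: abs_pow_eq_exp)
qed

text \<open>\<open>N(0, 2)\<close> is the law of the difference of two independent standard Gaussians.\<close>

definition abs_moment :: "real \<Rightarrow> real" where
  "abs_moment t = (\<integral>y. normal_density 0 (sqrt 2) y * abs_pow y t \<partial>lborel)"

lemma abs_moment_Gamma:
  assumes t: "t > -1"
  shows "integrable lborel (\<lambda>y. normal_density 0 (sqrt 2) y * abs_pow y t)"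
    and "abs_moment t = 2 powr t * Gamma ((t + 1) / 2) / sqrt pi"
proof -
  define k where "k = (\<lambda>y::real. indicator {0<..} y * (y powr t * exp (- y\<^sup>2 / 4)))"
  have k_int: "integrable lborel k"
    using set_integral_powr_gaussian(1)[OF t] unfolding k_def set_integrable_def by simp
  have k_val: "integral\<^sup>L lborel k = 2 powr t * Gamma ((t + 1) / 2)"
    using set_integral_powr_gaussian(2)[OF t] unfolding k_def set_lebesgue_integral_def by simp
  have k_refl_int: "integrable lborel (\<lambda>y. k (- y))"
    using lborel_integrable_real_affine_iff[of "-1" k 0] k_int by simp
  have k_refl_val: "integral\<^sup>L lborel (\<lambda>y. k (- y)) = 2 powr t * Gamma ((t + 1) / 2)"
    using lborel_integral_real_affine[of "-1" k 0] k_val by simp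
  have AE_eq: "AE y in lborel.
      normal_density 0 (sqrt 2) y * abs_pow y t = (k y + k (- y)) / (2 * sqrt pi)"
    using AE_lborel_singleton[of 0]
  proof eventually_elim
    case (elim y)
    then show ?case
      by (cases "y > 0") (auto simp: k_def abs_pow_def normal_density_def real_sqrt_mult)
  qed
  have sum_int: "integrable lborel (\<lambda>y. (k y + k (- y)) / (2 * sqrt pi))"
    using k_int k_refl_int by simp
  show "integrable lborel (\<lambda>y. normal_density 0 (sqrt 2) y * abs_pow y t)"
    using sum_int by (rule integrable_cong_AE_imp) (use AE_eq in \<open>auto dest: AE_symmetric\<close>)
  have "abs_moment t = (\<integral>y. (k y + k (- y)) / (2 * sqrt pi) \<partial>lborel)"
    unfolding abs_moment_def using AE_eq sum_int by (intro integral_cong_AE) auto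
  also have "\<dots> = 2 powr t * Gamma ((t + 1) / 2) / sqrt pi"
    using k_int k_refl_int by (simp add: k_val k_refl_val)
  finally show "abs_moment t = 2 powr t * Gamma ((t + 1) / 2) / sqrt pi" .
qed

lemma abs_moment_nonneg: "abs_moment t \<ge> 0"
  unfolding abs_moment_def by (rule integral_nonneg_AE) simp

lemma abs_moment_le_chord:
  assumes "0 \<le> t" "t \<le> s" "0 < s"
  shows "abs_moment t \<le> 1 - t / s * (1 - abs_moment s)"
proof -
  let ?g = "normal_density 0 (sqrt 2)"
  have "abs_moment t \<le> (\<integral>y. (1 - t / s) * ?g y + t / s * (?g y * abs_pow y s) \<partial>lborel)"
    unfolding abs_moment_def
  proof (rule integral_mono)
    fix y
    show "?g y * abs_pow y t \<le> (1 - t / s) * ?g y + t / s * (?g y * abs_pow y s)"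
      using mult_left_mono[OF abs_pow_le_chord[OF assms, of y] normal_density_nonneg]
      by (simp add: algebra_simps)
  qed (use assms abs_moment_Gamma(1)[of t] abs_moment_Gamma(1)[of s] in simp_all)
  also have "\<dots> = 1 - t / s * (1 - abs_moment s)"
    unfolding abs_moment_def using assms abs_moment_Gamma(1)[of s] by (simp add: algebra_simps)
  finally show ?thesis .
qed

lemma abs_moment_less_1: "\<exists>t > 0. abs_moment t < 1"
proof -
  define f where "f t = 2 powr t * Gamma ((t + 1) / 2)" for t :: real
  have half: "(1 / 2 :: real) \<notin> \<int>\<^sub>\<le>\<^sub>0"
    by (auto elim!: nonpos_Ints_cases)
  have "(f has_real_derivative ln 2 * sqrt pi + sqrt pi * Digamma (1 / 2) / 2) (at 0)"
    unfolding f_def using half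
    by (auto intro!: derivative_eq_intros simp: Gamma_one_half_real)
  moreover have "ln 2 * sqrt pi + sqrt pi * Digamma (1 / 2 :: real) / 2 = - euler_mascheroni * sqrt pi / 2"
    by (simp add: Digamma_one_half field_simps)
  ultimately have "(f has_real_derivative - euler_mascheroni * sqrt pi / 2) (at 0)"
    by simp
  from DERIV_neg_dec_right[OF this] obtain d
    where "d > 0" and d: "\<And>h. 0 < h \<Longrightarrow> h < d \<Longrightarrow> f (0 + h) < f 0"
    using euler_mascheroni_pos by auto
  define t where "t = d / 2"
  have t: "0 < t" "t < d"
    using \<open>d > 0\<close> by (auto simp: t_def)
  have "abs_moment t = f t / sqrt pi"
    using t by (simp add: abs_moment_Gamma(2) f_def)
  also have "\<dots> < f 0 / sqrt pi"
    using d[of t] t by (simp add: divide_strict_right_mono)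
  also have "f 0 / sqrt pi = 1"
    by (simp add: f_def Gamma_one_half_real)
  finally show ?thesis
    using t by blast
qed

lemma indep_vars_PiM_components:
  assumes "I \<noteq> {}" and M: "\<And>i. i \<in> I \<Longrightarrow> prob_space (M i)"
  shows "prob_space.indep_vars (PiM I M) M (\<lambda>i x. x i) I"
proof -
  interpret prob_space "PiM I M"
    using M by (rule prob_space_PiM)
  have "distr (PiM I M) (PiM I M) (\<lambda>x. \<lambda>i\<in>I. x i) = distr (PiM I M) (PiM I M) (\<lambda>x. x)"
    by (rule distr_cong) (auto simp: space_PiM PiE_def extensional_restrict)
  also have "\<dots> = PiM I (\<lambda>i. distr (PiM I M) (M i) (\<lambda>x. x i))"
    using M by (auto intro!: PiM_cong simp: distr_PiM_component)
  finally show ?thesis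
    using \<open>I \<noteq> {}\<close> by (subst indep_vars_iff_distr_eq_PiM') auto
qed

lemma PiM_density:
  fixes f :: "'a \<Rightarrow> ennreal"
  assumes I: "finite I" and M: "sigma_finite_measure M" and f: "f \<in> borel_measurable M"
    and prob: "prob_space (density M f)"
  shows "PiM I (\<lambda>_. density M f) = density (PiM I (\<lambda>_. M)) (\<lambda>x. \<Prod>i\<in>I. f (x i))"
proof -
  interpret M: product_sigma_finite "\<lambda>_. M"
    using M by (simp add: product_sigma_finite_def)
  interpret Mf: product_sigma_finite "\<lambda>_. density M f"
    using prob by (simp add: product_sigma_finite_def prob_space_imp_sigma_finite)
  show ?thesis
  proof (rule Mf.PiM_eqI[symmetric, OF I])
    show "sets (density (PiM I (\<lambda>_. M)) (\<lambda>x. \<Prod>i\<in>I. f (x i))) = sets (PiM I (\<lambda>_. density M f))"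
      by (auto intro!: sets_PiM_cong)
  next
    fix A assume A: "\<And>i. i \<in> I \<Longrightarrow> A i \<in> sets (density M f)"
    then have A': "\<And>i. i \<in> I \<Longrightarrow> A i \<in> sets M"
      by simp
    have "emeasure (density (PiM I (\<lambda>_. M)) (\<lambda>x. \<Prod>i\<in>I. f (x i))) (PiE I A)
        = (\<integral>\<^sup>+x. (\<Prod>i\<in>I. f (x i)) * indicator (PiE I A) x \<partial>PiM I (\<lambda>_. M))"
      using A' f I by (intro emeasure_density) (auto intro!: sets_PiM_I_finite)
    also have "\<dots> = (\<integral>\<^sup>+x. (\<Prod>i\<in>I. f (x i) * indicator (A i) (x i)) \<partial>PiM I (\<lambda>_. M))"
      using I by (intro nn_integral_cong)
        (auto simp: prod.distrib indicator_def space_PiM PiE_def Pi_def)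
    also have "\<dots> = (\<Prod>i\<in>I. \<integral>\<^sup>+y. f y * indicator (A i) y \<partial>M)"
      using A' f I by (intro M.product_nn_integral_prod) auto
    also have "\<dots> = (\<Prod>i\<in>I. emeasure (density M f) (A i))"
      using A' f by (intro prod.cong refl) (simp add: emeasure_density)
    finally show "emeasure (density (PiM I (\<lambda>_. M)) (\<lambda>x. \<Prod>i\<in>I. f (x i))) (PiE I A)
        = (\<Prod>i\<in>I. emeasure (density M f) (A i))" .
  qed
qed

definition gauss_vec :: "nat \<Rightarrow> (nat \<Rightarrow> real) measure" where
  "gauss_vec n = PiM {..<n} (\<lambda>_. std_normal_distribution)"

lemma prob_space_std_normal_distribution: "prob_space std_normal_distribution"
  by (rule prob_space_normal_density) simp

lemma prob_space_gauss_vec: "prob_space (gauss_vec n)"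
  unfolding gauss_vec_def by (intro prob_space_PiM prob_space_std_normal_distribution)

lemma sets_gauss_vec: "sets (gauss_vec n) = sets (PiM {..<n} (\<lambda>_. lborel))"
  unfolding gauss_vec_def by (rule sets_PiM_cong) auto

lemma gauss_vec_eq_density:
  "gauss_vec n = density (PiM {..<n} (\<lambda>_. lborel)) (\<lambda>x. \<Prod>i<n. std_normal_density (x i))"
  unfolding gauss_vec_def
  by (subst PiM_density)
    (auto simp: prob_space_std_normal_distribution lborel.sigma_finite_measure_axioms prod_ennreal)

lemma indep_vars_gauss_vec:
  assumes "n > 0"
  shows "prob_space.indep_vars (gauss_vec n)
    (\<lambda>_. std_normal_distribution) (\<lambda>i x. x i) {..<n}"
  unfolding gauss_vec_def using assms
  by (intro indep_vars_PiM_components prob_space_std_normal_distribution) auto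

lemma gauss_vec_diff_distributed:
  assumes "i < n" "j < n" "i \<noteq> j"
  shows "distributed (gauss_vec n) lborel (\<lambda>x. x i - x j) (normal_density 0 (sqrt 2))"
proof -
  interpret prob_space "gauss_vec n"
    by (rule prob_space_gauss_vec)
  have coord: "distributed (gauss_vec n) lborel (\<lambda>x. x k) std_normal_density" if "k < n" for k
  proof -
    have "distr (gauss_vec n) lborel (\<lambda>x. x k)
        = distr (gauss_vec n) (std_normal_distribution) (\<lambda>x. x k)"
      by (rule distr_cong) auto
    also have "\<dots> = std_normal_distribution"
      unfolding gauss_vec_def using that by (intro distr_PiM_component prob_space_std_normal_distribution) auto
    finally show ?thesis
      unfolding distributed_def using that by (auto simp: gauss_vec_def)
  qed
  have "indep_vars (\<lambda>_. std_normal_distribution) (\<lambda>k x. x k) {..<n}"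
    using assms by (intro indep_vars_gauss_vec) auto
  then have "indep_var (PiM {i} (\<lambda>_. std_normal_distribution)) (\<lambda>x. restrict x {i})
      (PiM {j} (\<lambda>_. std_normal_distribution)) (\<lambda>x. restrict x {j})"
    using assms indep_var_restrict[of _ "\<lambda>k x. x k" "{..<n}" "{i}" "{j}"] by auto
  then have "indep_var borel ((\<lambda>y. y i) \<circ> (\<lambda>x. restrict x {i}))
      borel ((\<lambda>y. y j) \<circ> (\<lambda>x. restrict x {j}))"
    by (rule indep_var_compose) measurable
  then have "indep_var borel (\<lambda>x. x i) borel (\<lambda>x. x j)"
    by (simp add: comp_def)
  from diff_indep_normal[OF this _ _ coord coord] show ?thesis
    using assms by simp
qed

definition index_pairs :: "nat \<Rightarrow> (nat \<times> nat) set" where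
  "index_pairs n = {(i, j). i < j \<and> j < n}"

lemma finite_index_pairs [simp]: "finite (index_pairs n)"
  by (rule finite_subset[of _ "{..<n} \<times> {..<n}"]) (auto simp: index_pairs_def)

lemma card_index_pairs_le: "card (index_pairs n) \<le> n\<^sup>2"
proof -
  have "card (index_pairs n) \<le> card ({..<n} \<times> {..<n})"
    by (rule card_mono) (auto simp: index_pairs_def)
  then show ?thesis
    by (simp add: power2_eq_square)
qed

definition vdm_pow :: "nat \<Rightarrow> real \<Rightarrow> (nat \<Rightarrow> real) \<Rightarrow> real" where
  "vdm_pow n b x = (\<Prod>p\<in>index_pairs n. abs_pow (x (fst p) - x (snd p)) b)"

definition vdm_mean :: "nat \<Rightarrow> real \<Rightarrow> real" where
  "vdm_mean n b = (\<integral>x. vdm_pow n b x \<partial>gauss_vec n)"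

lemma vdm_pow_nonneg: "vdm_pow n b x \<ge> 0"
  unfolding vdm_pow_def by (intro prod_nonneg) simp

lemma borel_measurable_vdm_pow [measurable]:
  "vdm_pow n b \<in> borel_measurable (PiM {..<n} (\<lambda>_. lborel))"
  unfolding vdm_pow_def
proof (rule borel_measurable_prod)
  fix p assume "p \<in> index_pairs n"
  then have "fst p \<in> {..<n}" "snd p \<in> {..<n}"
    by (auto simp: index_pairs_def)
  then show "(\<lambda>x. abs_pow (x (fst p) - x (snd p)) b) \<in> borel_measurable (PiM {..<n} (\<lambda>_. lborel))"
    by measurable
qed

lemma Zconst_eq_vdm_mean: "Zconst n b = sqrt (2 * pi) ^ n * vdm_mean n b"
proof -
  have gauss: "exp (- (1 / 2) * (\<Sum>i<n. (x i)\<^sup>2))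
      = sqrt (2 * pi) ^ n * (\<Prod>i<n. std_normal_density (x i))" for x :: "nat \<Rightarrow> real"
  proof -
    have "(\<Prod>i<n. std_normal_density (x i)) = (\<Prod>i<n. 1 / sqrt (2 * pi) * exp (- (x i)\<^sup>2 / 2))"
      by (simp add: normal_density_def)
    then have "sqrt (2 * pi) ^ n * (\<Prod>i<n. std_normal_density (x i))
        = sqrt (2 * pi) ^ n * ((1 / sqrt (2 * pi)) ^ n * (\<Prod>i<n. exp (- (x i)\<^sup>2 / 2)))"
      by (simp only: prod.distrib prod_constant card_lessThan)
    also have "\<dots> = exp (\<Sum>i<n. - (x i)\<^sup>2 / 2)"
      by (simp add: exp_sum power_one_over)
    finally show ?thesis
      by (simp add: sum_distrib_left sum_negf)
  qed
  have "vdm_mean n b = (\<integral>x. (\<Prod>i<n. std_normal_density (x i)) * vdm_pow n b x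
      \<partial>PiM {..<n} (\<lambda>_. lborel))"
    unfolding vdm_mean_def gauss_vec_eq_density
    by (subst integral_density) (auto intro!: prod_nonneg)
  then show ?thesis
    unfolding Zconst_def gauss vdm_pow_def index_pairs_def by (simp add: mult.assoc)
qed

lemma gauss_vec_abs_pow_diff:
  assumes "i < n" "j < n" "i \<noteq> j" "t > -1"
  shows "integrable (gauss_vec n) (\<lambda>x. abs_pow (x i - x j) t)"
    and "(\<integral>x. abs_pow (x i - x j) t \<partial>gauss_vec n) = abs_moment t"
  using distributed_integrable[OF gauss_vec_diff_distributed[OF assms(1-3)], of "\<lambda>y. abs_pow y t"]
    distributed_integral[OF gauss_vec_diff_distributed[OF assms(1-3)], of "\<lambda>y. abs_pow y t"]
    abs_moment_Gamma(1)[OF assms(4)]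
  by (simp_all add: abs_moment_def)

lemma AE_gauss_vec_neq:
  assumes "i < n" "j < n" "i \<noteq> j"
  shows "AE x in gauss_vec n. x i \<noteq> x j"
proof -
  note distributed = gauss_vec_diff_distributed[OF assms]
  have "AE y in density lborel (normal_density 0 (sqrt 2)). y \<noteq> 0"
    by (subst AE_density) (auto intro: AE_mp[OF AE_lborel_singleton[of 0]])
  then have "AE y in distr (gauss_vec n) lborel (\<lambda>x. x i - x j). y \<noteq> 0"
    unfolding distributed_distr_eq_density[OF distributed] .
  from AE_distrD[OF _ this] show ?thesis
    using distributed by (auto simp: distributed_def)
qed

lemma prod_le_mean_power:
  fixes a :: "'i \<Rightarrow> real"
  assumes K: "finite K" "K \<noteq> {}" and nonneg: "\<And>k. k \<in> K \<Longrightarrow> a k \<ge> 0"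
  shows "(\<Prod>k\<in>K. a k) \<le> (\<Sum>k\<in>K. a k ^ card K) / card K"
proof (cases "\<exists>k\<in>K. a k = 0")
  case True
  then show ?thesis
    using K nonneg by (simp add: prod_zero sum_nonneg)
next
  case False
  with nonneg have pos: "\<And>k. k \<in> K \<Longrightarrow> a k > 0"
    by force
  define m where "m = real (card K)"
  have m: "m > 0"
    using K by (simp add: m_def card_gt_0_iff)
  have "(\<Prod>k\<in>K. a k) = exp (\<Sum>k\<in>K. (1 / m) *\<^sub>R (m * ln (a k)))"
    using pos m by (simp add: exp_sum[OF K(1)])
  also have "\<dots> \<le> (\<Sum>k\<in>K. 1 / m * exp (m * ln (a k)))"
    using K m by (intro convex_on_sum[OF K exp_convex]) (auto simp: m_def)
  also have "\<dots> = (\<Sum>k\<in>K. a k ^ card K) / card K"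
    using pos by (simp add: m_def exp_of_nat_mult sum_divide_distrib)
  finally show ?thesis .
qed

definition antidiagonal :: "nat \<Rightarrow> nat \<Rightarrow> (nat \<times> nat) set" where
  "antidiagonal n k = {p \<in> index_pairs n. (fst p + snd p) mod n = k}"

lemma finite_antidiagonal [simp]: "finite (antidiagonal n k)"
  by (rule finite_subset[OF _ finite_index_pairs]) (auto simp: antidiagonal_def)

lemma mod_add_left_cancel_less:
  fixes v x y n :: nat
  assumes "(v + x) mod n = (v + y) mod n" "x < n" "y < n"
  shows "x = y"
  using assms cong_add_lcancel_nat[of v x y n] cong_less_imp_eq_nat[of x n y]
  by (simp add: cong_def)

lemma antidiagonal_disjoint:
  assumes "p \<in> antidiagonal n k" "q \<in> antidiagonal n k" "p \<noteq> q"
  shows "{fst p, snd p} \<inter> {fst q, snd q} = {}"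
proof (rule ccontr)
  obtain a b c d where p: "p = (a, b)" and q: "q = (c, d)"
    by (cases p, cases q)
  have ab: "a < b" "b < n" "(a + b) mod n = k" and cd: "c < d" "d < n" "(c + d) mod n = k"
    using assms(1,2) by (auto simp: antidiagonal_def index_pairs_def p q)
  assume "{fst p, snd p} \<inter> {fst q, snd q} \<noteq> {}"
  then consider "a = c" | "a = d" | "b = c" | "b = d"
    by (auto simp: p q)
  then show False
  proof cases
    case 1
    then have "b = d"
      using mod_add_left_cancel_less[of a b n d] ab cd by simp
    with 1 show False
      using assms(3) p q by simp
  next
    case 2
    then have "b = c"
      using mod_add_left_cancel_less[of a b n c] ab cd by (simp add: add.commute)
    with 2 show False
      using ab cd by simp
  next
    case 3
    then have "a = d"
      using mod_add_left_cancel_less[of b a n d] ab cd by (simp add: add.commute)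
    with 3 show False
      using ab cd by simp
  next
    case 4
    then have "a = c"
      using mod_add_left_cancel_less[of b a n c] ab cd by (simp add: add.commute)
    with 4 show False
      using assms(3) p q by simp
  qed
qed

lemma card_antidiagonal_le: "card (antidiagonal n k) \<le> n"
proof -
  have "inj_on fst (antidiagonal n k)"
  proof (rule inj_onI)
    fix p q assume "p \<in> antidiagonal n k" "q \<in> antidiagonal n k" "fst p = fst q"
    then show "p = q"
      using antidiagonal_disjoint[of p n k q] by blast
  qed
  moreover have "fst ` antidiagonal n k \<subseteq> {..<n}"
    by (auto simp: antidiagonal_def index_pairs_def)
  ultimately show ?thesis
    using card_inj_on_le[of fst "antidiagonal n k" "{..<n}"] by simp
qed

lemma card_double_mod_eq_le:
  fixes n k :: nat
  shows "card {i. i < n \<and> (2 * i) mod n = k} \<le> 2"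
proof (cases "{i. i < n \<and> (2 * i) mod n = k} = {}")
  case True
  then show ?thesis
    by (subst True) simp
next
  case False
  define U where "U = {i. i < n \<and> (2 * i) mod n = k}"
  define i0 where "i0 = Min U"
  have "i0 \<in> U"
    using False unfolding i0_def U_def by (intro Min_in) auto
  have "U \<subseteq> {i0, i0 + n div 2}"
  proof
    fix i assume i: "i \<in> U"
    then have "i0 \<le> i" "i < n" "(2 * i) mod n = (2 * i0) mod n"
      using \<open>i0 \<in> U\<close> by (auto simp: i0_def U_def)
    then have "n dvd 2 * i - 2 * i0"
      by (subst mod_eq_dvd_iff_nat[symmetric]) auto
    then obtain c where c: "2 * i - 2 * i0 = n * c"
      by blast
    with \<open>i < n\<close> have "n * c < n * 2"
      by linarith
    then have "c < 2"
      by simp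
    with c show "i \<in> {i0, i0 + n div 2}"
      using \<open>i0 \<le> i\<close> by (cases c) auto
  qed
  then have "card U \<le> card {i0, i0 + n div 2}"
    by (intro card_mono) auto
  also have "\<dots> \<le> 2"
    by (simp add: card_insert_if)
  finally show ?thesis
    by (simp add: U_def)
qed

lemma antidiagonal_cover:
  assumes i: "i < n" and k: "k < n" and "(2 * i) mod n \<noteq> k"
  shows "\<exists>p\<in>antidiagonal n k. i \<in> {fst p, snd p}"
proof -
  define j where "j = (n + k - i) mod n"
  have "j < n"
    using k by (simp add: j_def)
  have ij: "(i + j) mod n = k"
  proof -
    have "(i + j) mod n = (i + (n + k - i)) mod n"
      by (simp add: j_def mod_add_right_eq)
    also have "i + (n + k - i) = n + k"
      using i by simp
    finally show ?thesis
      using k by simp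
  qed
  then have "j \<noteq> i"
    using assms(3) by (auto simp: mult_2)
  then have "(min i j, max i j) \<in> antidiagonal n k"
    using i ij \<open>j < n\<close> by (auto simp: antidiagonal_def index_pairs_def min_def max_def add.commute)
  then show ?thesis
    by (intro bexI[of _ "(min i j, max i j)"]) auto
qed

lemma card_antidiagonal_ge:
  assumes k: "k < n"
  shows "n \<le> 2 * card (antidiagonal n k) + 2"
proof -
  define V where "V = (\<Union>p\<in>antidiagonal n k. {fst p, snd p})"
  define U where "U = {i. i < n \<and> (2 * i) mod n = k}"
  have "card V \<le> (\<Sum>p\<in>antidiagonal n k. card {fst p, snd p})"
    unfolding V_def by (rule card_UN_le) simp
  also have "\<dots> \<le> (\<Sum>p\<in>antidiagonal n k. 2)"
    by (intro sum_mono) (simp add: card_insert_if)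
  finally have card_V: "card V \<le> 2 * card (antidiagonal n k)"
    by simp
  have "{..<n} \<subseteq> V \<union> U"
    using antidiagonal_cover[OF _ k] by (fastforce simp: V_def U_def)
  then have "n \<le> card (V \<union> U)"
    using card_mono[of "V \<union> U" "{..<n}"] by (simp add: V_def U_def)
  also have "\<dots> \<le> card V + card U"
    by (rule card_Un_le)
  finally show ?thesis
    using card_V card_double_mod_eq_le[of n k] by (simp add: U_def)
qed

lemma indep_vars_antidiagonal:
  assumes "n > 0"
  shows "prob_space.indep_vars (gauss_vec n) (\<lambda>_. borel)
    (\<lambda>p x. abs_pow (x (fst p) - x (snd p)) t) (antidiagonal n k)"
proof -
  interpret prob_space "gauss_vec n"
    by (rule prob_space_gauss_vec)
  have "indep_vars (\<lambda>p. PiM {fst p, snd p} (\<lambda>_. std_normal_distribution))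
      (\<lambda>p x. restrict x {fst p, snd p}) (antidiagonal n k)"
  proof (rule indep_vars_restrict[OF indep_vars_gauss_vec[OF assms], simplified])
    show "disjoint_family_on (\<lambda>p. {fst p, snd p}) (antidiagonal n k)"
      unfolding disjoint_family_on_def using antidiagonal_disjoint by blast
  qed (auto simp: antidiagonal_def index_pairs_def)
  then have "indep_vars (\<lambda>_. borel)
      (\<lambda>p x. (\<lambda>y. abs_pow (y (fst p) - y (snd p)) t) (restrict x {fst p, snd p})) (antidiagonal n k)"
    by (rule indep_vars_compose2) measurable
  then show ?thesis
    by simp
qed

lemma gauss_vec_antidiagonal_prod:
  assumes "n > 0" "t > -1"
  shows "integrable (gauss_vec n) (\<lambda>x. \<Prod>p\<in>antidiagonal n k. abs_pow (x (fst p) - x (snd p)) t)"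
    and "(\<integral>x. (\<Prod>p\<in>antidiagonal n k. abs_pow (x (fst p) - x (snd p)) t) \<partial>gauss_vec n)
      = abs_moment t ^ card (antidiagonal n k)"
proof -
  interpret prob_space "gauss_vec n"
    by (rule prob_space_gauss_vec)
  have "integrable (gauss_vec n) (\<lambda>x. abs_pow (x (fst p) - x (snd p)) t)"
    and "(\<integral>x. abs_pow (x (fst p) - x (snd p)) t \<partial>gauss_vec n) = abs_moment t"
    if "p \<in> antidiagonal n k" for p
    using that gauss_vec_abs_pow_diff[of "fst p" n "snd p" t] assms(2)
    by (auto simp: antidiagonal_def index_pairs_def)
  with indep_vars_antidiagonal[OF assms(1)] show
    "integrable (gauss_vec n) (\<lambda>x. \<Prod>p\<in>antidiagonal n k. abs_pow (x (fst p) - x (snd p)) t)"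
    and "(\<integral>x. (\<Prod>p\<in>antidiagonal n k. abs_pow (x (fst p) - x (snd p)) t) \<partial>gauss_vec n)
      = abs_moment t ^ card (antidiagonal n k)"
    by (simp_all add: indep_vars_integrable indep_vars_lebesgue_integral)
qed

lemma vdm_pow_le_mean_antidiagonal:
  assumes "n > 0" "b \<ge> 0"
  shows "vdm_pow n b x
    \<le> (\<Sum>k<n. \<Prod>p\<in>antidiagonal n k. abs_pow (x (fst p) - x (snd p)) (real n * b)) / n"
proof -
  have "vdm_pow n b x = (\<Prod>k<n. \<Prod>p\<in>antidiagonal n k. abs_pow (x (fst p) - x (snd p)) b)"
    unfolding vdm_pow_def antidiagonal_def using assms(1)
    by (intro prod.group[symmetric] finite_index_pairs) (auto simp: index_pairs_def)
  also have "\<dots> \<le> (\<Sum>k<n. (\<Prod>p\<in>antidiagonal n k. abs_pow (x (fst p) - x (snd p)) b) ^ card {..<n})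
      / card {..<n}"
    using assms(1) by (intro prod_le_mean_power) (auto intro!: prod_nonneg)
  also have "\<dots> = (\<Sum>k<n. \<Prod>p\<in>antidiagonal n k. abs_pow (x (fst p) - x (snd p)) (real n * b)) / n"
    using assms(2) by (simp add: prod_power_distrib abs_pow_power)
  finally show ?thesis .
qed

lemma integrable_vdm_pow:
  assumes "b \<ge> 0"
  shows "integrable (gauss_vec n) (vdm_pow n b)"
proof (cases "n = 0")
  case True
  interpret prob_space "gauss_vec n"
    by (rule prob_space_gauss_vec)
  have "vdm_pow n b = (\<lambda>_. 1)"
    using True by (simp add: vdm_pow_def index_pairs_def fun_eq_iff)
  then show ?thesis
    by simp
next
  case False
  let ?S = "\<lambda>x. (\<Sum>k<n. \<Prod>p\<in>antidiagonal n k. abs_pow (x (fst p) - x (snd p)) (real n * b)) / n"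
  have "real n * b \<ge> 0"
    using assms by simp
  then have "integrable (gauss_vec n) ?S"
    using False by (intro integrable_divide Bochner_Integration.integrable_sum
        gauss_vec_antidiagonal_prod(1)) auto
  moreover have "vdm_pow n b \<in> borel_measurable (gauss_vec n)"
    by (subst measurable_cong_sets[OF sets_gauss_vec refl]) (rule borel_measurable_vdm_pow)
  moreover have "norm (vdm_pow n b x) \<le> norm (?S x)" for x
  proof -
    have "vdm_pow n b x \<le> ?S x"
      using False assms by (intro vdm_pow_le_mean_antidiagonal) auto
    then show ?thesis
      unfolding real_norm_def abs_of_nonneg[OF vdm_pow_nonneg] by (rule order.trans) (rule abs_ge_self)
  qed
  ultimately show ?thesis
    by (blast intro: Bochner_Integration.integrable_bound[OF _ _ AE_I2])
qed

lemma vdm_mean_le: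
  assumes "n > 0" "b \<ge> 0"
    and B: "\<And>k. k < n \<Longrightarrow> abs_moment (real n * b) ^ card (antidiagonal n k) \<le> B"
  shows "vdm_mean n b \<le> B"
proof -
  let ?G = "\<lambda>k x. \<Prod>p\<in>antidiagonal n k. abs_pow (x (fst p) - x (snd p)) (real n * b)"
  have "real n * b \<ge> 0"
    using assms by simp
  then have nb: "real n * b > -1"
    by linarith
  then have G_int: "integrable (gauss_vec n) (?G k)" for k
    using assms by (intro gauss_vec_antidiagonal_prod(1)) auto
  have "vdm_mean n b \<le> (\<integral>x. (\<Sum>k<n. ?G k x) / n \<partial>gauss_vec n)"
    unfolding vdm_mean_def using assms G_int
    by (intro integral_mono integrable_vdm_pow vdm_pow_le_mean_antidiagonal) auto
  also have "\<dots> = (\<Sum>k<n. abs_moment (real n * b) ^ card (antidiagonal n k)) / n"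
    using assms G_int nb by (simp add: gauss_vec_antidiagonal_prod(2))
  also have "\<dots> \<le> (\<Sum>k<n. B) / n"
    using B by (intro divide_right_mono sum_mono) auto
  also have "\<dots> = B"
    using assms by simp
  finally show ?thesis .
qed

text \<open>Unlike \<open>jensens_inequality\<close>, this needs no integrability of \<open>exp \<circ> Y\<close>.\<close>

lemma (in prob_space) exp_expectation_le:
  fixes Y f :: "'a \<Rightarrow> real"
  assumes Y: "integrable M Y" and f: "integrable M f" and le: "AE x in M. exp (Y x) \<le> f x"
  shows "exp (expectation Y) \<le> expectation f"
proof -
  define a where "a = expectation Y"
  have "AE x in M. exp a * (1 + (Y x - a)) \<le> f x"
    using le
  proof eventually_elim
    case (elim x)
    have "exp a * (1 + (Y x - a)) \<le> exp a * exp (Y x - a)"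
      using exp_ge_add_one_self[of "Y x - a"] by (intro mult_left_mono) simp_all
    also have "\<dots> = exp (Y x)"
      by (simp add: exp_diff)
    finally show ?case
      using elim by linarith
  qed
  then have "expectation (\<lambda>x. exp a * (1 + (Y x - a))) \<le> expectation f"
    using Y f by (intro integral_mono_AE) auto
  moreover have "expectation (\<lambda>x. exp a * (1 + (Y x - a))) = exp a"
    using Y by (simp add: prob_space a_def algebra_simps)
  ultimately show ?thesis
    by (simp add: a_def)
qed

lemma ln_ge_one_minus_powr:
  fixes u a :: real
  assumes "u > 0" "a > 0"
  shows "(1 - u powr - a) / a \<le> ln u"
proof -
  have "ln (u powr - a) \<le> u powr - a - 1"
    using assms by (intro ln_le_minus_one) simp
  then show ?thesis
    using assms by (simp add: ln_powr field_simps)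
qed

lemma vdm_pow_ge_exp:
  fixes b :: real
  assumes b: "b \<ge> 0" and distinct: "\<forall>p\<in>index_pairs n. x (fst p) \<noteq> x (snd p)"
  shows "exp (\<Sum>p\<in>index_pairs n. 2 * b * (1 - abs_pow (x (fst p) - x (snd p)) (- 1 / 2)))
    \<le> vdm_pow n b x"
proof -
  have "(\<Sum>p\<in>index_pairs n. 2 * b * (1 - abs_pow (x (fst p) - x (snd p)) (- 1 / 2)))
      \<le> (\<Sum>p\<in>index_pairs n. b * ln \<bar>x (fst p) - x (snd p)\<bar>)"
  proof (intro sum_mono)
    fix p assume "p \<in> index_pairs n"
    then have "\<bar>x (fst p) - x (snd p)\<bar> > 0"
      using distinct by auto
    from ln_ge_one_minus_powr[OF this, of "1 / 2"]
    have "2 * (1 - abs_pow (x (fst p) - x (snd p)) (- 1 / 2)) \<le> ln \<bar>x (fst p) - x (snd p)\<bar>"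
      by (simp add: abs_pow_def)
    from mult_left_mono[OF this b] show "2 * b * (1 - abs_pow (x (fst p) - x (snd p)) (- 1 / 2))
        \<le> b * ln \<bar>x (fst p) - x (snd p)\<bar>"
      by (simp add: algebra_simps)
  qed
  then have "exp (\<Sum>p\<in>index_pairs n. 2 * b * (1 - abs_pow (x (fst p) - x (snd p)) (- 1 / 2)))
      \<le> exp (\<Sum>p\<in>index_pairs n. b * ln \<bar>x (fst p) - x (snd p)\<bar>)"
    by simp
  also have "\<dots> = vdm_pow n b x"
    unfolding vdm_pow_def exp_sum[OF finite_index_pairs]
    using distinct by (intro prod.cong refl) (simp add: abs_pow_eq_exp)
  finally show ?thesis .
qed

lemma vdm_mean_ge:
  fixes b :: real
  assumes b: "b \<ge> 0"
  shows "exp (- 2 * b * card (index_pairs n) * (abs_moment (- 1 / 2) - 1)) \<le> vdm_mean n b"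
proof -
  interpret prob_space "gauss_vec n"
    by (rule prob_space_gauss_vec)
  define Y where "Y x = (\<Sum>p\<in>index_pairs n. 2 * b * (1 - abs_pow (x (fst p) - x (snd p)) (- 1 / 2)))"
    for x :: "nat \<Rightarrow> real"
  have pair: "integrable (gauss_vec n) (\<lambda>x. abs_pow (x (fst p) - x (snd p)) (- 1 / 2))"
    "expectation (\<lambda>x. abs_pow (x (fst p) - x (snd p)) (- 1 / 2)) = abs_moment (- 1 / 2)"
    if "p \<in> index_pairs n" for p
    using that gauss_vec_abs_pow_diff[of "fst p" n "snd p" "- 1 / 2"] by (auto simp: index_pairs_def)
  then have Y_int: "integrable (gauss_vec n) Y"
    unfolding Y_def by auto
  have "expectation Y = (\<Sum>p\<in>index_pairs n. 2 * b * (1 - abs_moment (- 1 / 2)))"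
    unfolding Y_def using pair by (subst Bochner_Integration.integral_sum) (auto simp: prob_space)
  then have Y_mean: "expectation Y = - 2 * b * card (index_pairs n) * (abs_moment (- 1 / 2) - 1)"
    by (simp add: algebra_simps)
  have "AE x in gauss_vec n. \<forall>p\<in>index_pairs n. x (fst p) \<noteq> x (snd p)"
    by (intro AE_finite_allI finite_index_pairs) (auto simp: index_pairs_def intro!: AE_gauss_vec_neq)
  then have "AE x in gauss_vec n. exp (Y x) \<le> vdm_pow n b x"
    unfolding Y_def by eventually_elim (rule vdm_pow_ge_exp[OF b])
  from exp_expectation_le[OF Y_int integrable_vdm_pow[OF b] this] show ?thesis
    by (simp add: Y_mean vdm_mean_def)
qed

lemma vdm_mean_ge_exp:
  fixes b :: real
  assumes "b \<ge> 0"
  shows "exp (- \<bar>2 * (abs_moment (- 1 / 2) - 1)\<bar> * b * real n ^ 2) \<le> vdm_mean n b"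
proof -
  have "2 * (abs_moment (- 1 / 2) - 1) * (b * card (index_pairs n))
      \<le> \<bar>2 * (abs_moment (- 1 / 2) - 1)\<bar> * (b * real n ^ 2)"
    using assms card_index_pairs_le[of n]
    by (intro mult_mono abs_ge_self mult_left_mono) (auto simp flip: of_nat_power)
  then have "exp (- \<bar>2 * (abs_moment (- 1 / 2) - 1)\<bar> * b * real n ^ 2)
      \<le> exp (- 2 * b * card (index_pairs n) * (abs_moment (- 1 / 2) - 1))"
    by (simp add: algebra_simps)
  also have "\<dots> \<le> vdm_mean n b"
    by (rule vdm_mean_ge[OF assms])
  finally show ?thesis .
qed

lemma abs_moment_power_le:
  fixes s t :: real
  assumes "0 \<le> t" "t \<le> s" "0 < s"
  shows "abs_moment t ^ m \<le> exp (- ((1 - abs_moment s) / s) * t * m)"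
proof -
  define c where "c = (1 - abs_moment s) / s"
  have "abs_moment t \<le> 1 + - (c * t)"
    using abs_moment_le_chord[OF assms] by (simp add: c_def field_simps)
  also have "\<dots> \<le> exp (- (c * t))"
    by (rule exp_ge_add_one_self)
  finally have "abs_moment t ^ m \<le> exp (- (c * t)) ^ m"
    by (intro power_mono abs_moment_nonneg)
  then show ?thesis
    by (simp add: c_def exp_of_nat_mult[symmetric] mult.commute mult.left_commute)
qed

lemma vdm_mean_le_exp:
  fixes b :: real
  assumes "n > 0" "b \<ge> 0" "real n * b \<le> 1"
  shows "vdm_mean n b \<le> exp (\<bar>abs_moment 1 - 1\<bar> * b * real n ^ 2)"
proof (rule vdm_mean_le[OF assms(1,2)])
  fix k assume "k < n"
  have "abs_moment (n * b) ^ card (antidiagonal n k)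
      \<le> exp (- ((1 - abs_moment 1) / 1) * (n * b) * card (antidiagonal n k))"
    using abs_moment_power_le[of "n * b" 1] assms by simp
  also have "\<dots> \<le> exp (\<bar>abs_moment 1 - 1\<bar> * b * real n ^ 2)"
    using assms card_antidiagonal_le[of n k]
    by (simp add: power2_eq_square mult.assoc abs_ge_self mult_mono)
  finally show "abs_moment (n * b) ^ card (antidiagonal n k)
      \<le> exp (\<bar>abs_moment 1 - 1\<bar> * b * real n ^ 2)" .
qed

lemma vdm_mean_le_exp_decay:
  fixes b s :: real
  assumes "n > 0" "b \<ge> 0" "0 < s" "real n * b \<le> s" "abs_moment s \<le> 1"
  shows "vdm_mean n b \<le> exp (- ((1 - abs_moment s) / s) * (n * b) * ((real n - 2) / 2))"
proof (rule vdm_mean_le[OF assms(1,2)])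
  fix k assume "k < n"
  have "abs_moment (n * b) ^ card (antidiagonal n k)
      \<le> exp (- ((1 - abs_moment s) / s) * (n * b) * card (antidiagonal n k))"
    using abs_moment_power_le[of "n * b" s] assms by simp
  also have "\<dots> \<le> exp (- ((1 - abs_moment s) / s) * (n * b) * ((real n - 2) / 2))"
  proof -
    have "real n \<le> 2 * card (antidiagonal n k) + 2"
      using card_antidiagonal_ge[OF \<open>k < n\<close>] by linarith
    moreover have "(1 - abs_moment s) / s * (n * b) \<ge> 0"
      using assms by simp
    ultimately have "(1 - abs_moment s) / s * (n * b) * ((real n - 2) / 2)
        \<le> (1 - abs_moment s) / s * (n * b) * card (antidiagonal n k)"
      by (intro mult_left_mono) auto
    then show ?thesis
      by simp
  qed
  finally show "abs_moment (n * b) ^ card (antidiagonal n k)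
      \<le> exp (- ((1 - abs_moment s) / s) * (n * b) * ((real n - 2) / 2))" .
qed

lemma Zconst_ratio: "Zconst n a / Zconst n b = vdm_mean n a / vdm_mean n b"
  by (simp add: Zconst_eq_vdm_mean)

lemma vdm_mean_pos: "b \<ge> 0 \<Longrightarrow> vdm_mean n b > 0"
  using vdm_mean_ge_exp[of b n] by (meson exp_gt_zero less_le_trans)

lemma vdm_mean_tendsto_1:
  fixes b :: "nat \<Rightarrow> real"
  assumes b: "\<And>n. b n \<ge> 0" and lim: "(\<lambda>n. b n * real n ^ 2) \<longlonglongrightarrow> 0"
  shows "(\<lambda>n. vdm_mean n (b n)) \<longlonglongrightarrow> 1"
proof (rule tendsto_sandwich)
  define K where "K = \<bar>2 * (abs_moment (- 1 / 2) - 1)\<bar>"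
  define C where "C = \<bar>abs_moment 1 - 1\<bar>"
  show "\<forall>\<^sub>F n in sequentially. exp (- K * (b n * real n ^ 2)) \<le> vdm_mean n (b n)"
    using vdm_mean_ge_exp[OF b] by (simp add: K_def mult.assoc)
  have "\<forall>\<^sub>F n in sequentially. n > 0 \<and> b n * real n ^ 2 < 1"
    using eventually_gt_at_top[of 0] order_tendstoD(2)[OF lim zero_less_one] by eventually_elim simp
  then show "\<forall>\<^sub>F n in sequentially. vdm_mean n (b n) \<le> exp (C * (b n * real n ^ 2))"
  proof eventually_elim
    case (elim n)
    have "n * b n \<le> b n * real n ^ 2"
      using elim b[of n] mult_right_mono[of 1 "real n" "b n"]
      by (simp add: power2_eq_square mult_left_mono mult.commute)
    then show ?case
      using elim b[of n] vdm_mean_le_exp[of n "b n"] by (simp add: C_def mult_ac)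
  qed
  show "(\<lambda>n. exp (- K * (b n * real n ^ 2))) \<longlonglongrightarrow> 1"
    and "(\<lambda>n. exp (C * (b n * real n ^ 2))) \<longlonglongrightarrow> 1"
    using tendsto_exp[OF tendsto_mult_left[OF lim, of "- K"]]
      tendsto_exp[OF tendsto_mult_left[OF lim, of C]] by simp_all
qed

lemma Zconst_ratio_tendsto_1:
  fixes b b' :: "nat \<Rightarrow> real"
  assumes "\<And>n. b n \<ge> 0" "\<And>n. b' n \<ge> 0"
    and "(\<lambda>n. b n * real n ^ 2) \<longlonglongrightarrow> 0" "(\<lambda>n. b' n * real n ^ 2) \<longlonglongrightarrow> 0"
  shows "(\<lambda>n. Zconst n (b' n) / Zconst n (b n)) \<longlonglongrightarrow> 1"
  using tendsto_divide[OF vdm_mean_tendsto_1[OF assms(2,4)] vdm_mean_tendsto_1[OF assms(1,3)]]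
  by (simp add: Zconst_ratio)

lemma vdm_mean_ratio_le:
  fixes b b' s :: real
  assumes "n > 0" "b \<ge> 0" "b' > 0" "0 < s" "real n * b' \<le> s" "abs_moment s \<le> 1"
  shows "vdm_mean n b' / vdm_mean n b
    \<le> exp (- ((((1 - abs_moment s) / s) * ((real n - 2) / (2 * real n))
              - b / b' * \<bar>2 * (abs_moment (- 1 / 2) - 1)\<bar>) * (b' * real n ^ 2)))"
proof -
  define c where "c = (1 - abs_moment s) / s"
  define K where "K = \<bar>2 * (abs_moment (- 1 / 2) - 1)\<bar>"
  have "vdm_mean n b' \<le> exp (- c * (real n * b') * ((real n - 2) / 2))"
    unfolding c_def using assms by (intro vdm_mean_le_exp_decay) auto
  moreover have "exp (- K * b * real n ^ 2) \<le> vdm_mean n b"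
    unfolding K_def using assms(2) by (rule vdm_mean_ge_exp)
  ultimately have "vdm_mean n b' / vdm_mean n b
      \<le> exp (- c * (real n * b') * ((real n - 2) / 2)) / exp (- K * b * real n ^ 2)"
    by (intro frac_le) auto
  also have "\<dots> = exp (- c * (real n * b') * ((real n - 2) / 2) + K * b * real n ^ 2)"
    by (simp add: exp_diff[symmetric])
  also have "- c * (real n * b') * ((real n - 2) / 2) + K * b * real n ^ 2
      = - ((c * ((real n - 2) / (2 * real n)) - b / b' * K) * (b' * real n ^ 2))"
    using assms(1,3) by (simp add: field_simps power2_eq_square)
  finally show ?thesis
    by (simp add: c_def K_def)
qed

lemma Zconst_ratio_tendsto_0:
  fixes b b' :: "nat \<Rightarrow> real"
  assumes b: "\<And>n. b n \<ge> 0" and b': "\<And>n. b' n > 0"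
    and ratio: "(\<lambda>n. b n / b' n) \<longlonglongrightarrow> 0"
    and small: "(\<lambda>n. real n * b' n) \<longlonglongrightarrow> 0"
    and large: "filterlim (\<lambda>n. b' n * real n ^ 2) at_top sequentially"
  shows "(\<lambda>n. Zconst n (b' n) / Zconst n (b n)) \<longlonglongrightarrow> 0"
proof -
  obtain s where s: "0 < s" "abs_moment s < 1"
    using abs_moment_less_1 by blast
  define c where "c = (1 - abs_moment s) / s"
  define K where "K = \<bar>2 * (abs_moment (- 1 / 2) - 1)\<bar>"
  define h where "h n = c * ((real n - 2) / (2 * real n)) - b n / b' n * K" for n
  have half: "(\<lambda>n. (real n - 2) / (2 * real n)) \<longlonglongrightarrow> 1 / 2"
    by real_asymp
  have "h \<longlonglongrightarrow> c * (1 / 2) - 0 * K"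
    unfolding h_def by (intro tendsto_diff tendsto_mult tendsto_const ratio half)
  moreover have "c * (1 / 2) - 0 * K > 0"
    using s by (simp add: c_def)
  ultimately have "filterlim (\<lambda>n. h n * (b' n * real n ^ 2)) at_top sequentially"
    using large by (rule filterlim_tendsto_pos_mult_at_top)
  then have "filterlim (\<lambda>n. - (h n * (b' n * real n ^ 2))) at_bot sequentially"
    by (simp add: filterlim_uminus_at_top[symmetric])
  then have bound_0: "(\<lambda>n. exp (- (h n * (b' n * real n ^ 2)))) \<longlonglongrightarrow> 0"
    by (rule filterlim_compose[OF exp_at_bot])
  have "\<forall>\<^sub>F n in sequentially. n > 0 \<and> real n * b' n < s"
    using eventually_gt_at_top[of 0] order_tendstoD(2)[OF small s(1)] by eventually_elim simp
  then have upper: "\<forall>\<^sub>F n in sequentially.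
      Zconst n (b' n) / Zconst n (b n) \<le> exp (- (h n * (b' n * real n ^ 2)))"
  proof eventually_elim
    case (elim n)
    then have "vdm_mean n (b' n) / vdm_mean n (b n) \<le> exp (- (h n * (b' n * real n ^ 2)))"
      unfolding h_def c_def K_def using b b' s by (intro vdm_mean_ratio_le) auto
    then show ?case
      by (simp add: Zconst_ratio)
  qed
  have lower: "\<forall>\<^sub>F n in sequentially. 0 \<le> Zconst n (b' n) / Zconst n (b n)"
    using b b' by (simp add: Zconst_ratio vdm_mean_pos less_imp_le)
  show ?thesis
    by (rule tendsto_sandwich[OF lower upper tendsto_const bound_0])
qed

theorem lemma1p2:
  fixes \<beta> \<beta>' :: "nat \<Rightarrow> real"
  assumes "\<And>n. \<beta> n \<ge> 0" and "\<And>n. \<beta>' n > 0"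
  shows "(((\<lambda>n. \<beta> n / \<beta>' n) \<longlonglongrightarrow> 0) \<and>
           ((\<lambda>n. \<beta>' n / (1 / real n ^ 2)) \<longlonglongrightarrow> 0)
         \<longrightarrow> ((\<lambda>n. Zconst n (\<beta>' n) / Zconst n (\<beta> n)) \<longlonglongrightarrow> 1))
       \<and> (((\<lambda>n. \<beta> n / \<beta>' n) \<longlonglongrightarrow> 0) \<and>
           ((\<lambda>n. \<beta>' n / (1 / real n)) \<longlonglongrightarrow> 0) \<and>
           ((\<lambda>n. (1 / real n ^ 2) / \<beta>' n) \<longlonglongrightarrow> 0)
         \<longrightarrow> ((\<lambda>n. Zconst n (\<beta>' n) / Zconst n (\<beta> n)) \<longlonglongrightarrow> 0))"
proof -
  have part_i: "(\<lambda>n. Zconst n (\<beta>' n) / Zconst n (\<beta> n)) \<longlonglongrightarrow> 1"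
    if ratio: "(\<lambda>n. \<beta> n / \<beta>' n) \<longlonglongrightarrow> 0"
      and tiny: "(\<lambda>n. \<beta>' n / (1 / real n ^ 2)) \<longlonglongrightarrow> 0"
  proof (rule Zconst_ratio_tendsto_1[OF assms(1) less_imp_le[OF assms(2)]])
    show tiny': "(\<lambda>n. \<beta>' n * real n ^ 2) \<longlonglongrightarrow> 0"
      using tiny by simp
    have "\<beta> n / \<beta>' n * (\<beta>' n * real n ^ 2) = \<beta> n * real n ^ 2" for n
      using assms(2)[of n] by simp
    then show "(\<lambda>n. \<beta> n * real n ^ 2) \<longlonglongrightarrow> 0"
      using tendsto_mult[OF ratio tiny'] by simp
  qed
  have part_ii: "(\<lambda>n. Zconst n (\<beta>' n) / Zconst n (\<beta> n)) \<longlonglongrightarrow> 0"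
    if ratio: "(\<lambda>n. \<beta> n / \<beta>' n) \<longlonglongrightarrow> 0"
      and small: "(\<lambda>n. \<beta>' n / (1 / real n)) \<longlonglongrightarrow> 0"
      and large: "(\<lambda>n. (1 / real n ^ 2) / \<beta>' n) \<longlonglongrightarrow> 0"
  proof (rule Zconst_ratio_tendsto_0[OF assms ratio])
    show "(\<lambda>n. real n * \<beta>' n) \<longlonglongrightarrow> 0"
      using small by (simp add: mult.commute)
    have "\<forall>\<^sub>F n in sequentially. 0 < (1 / real n ^ 2) / \<beta>' n"
      using eventually_gt_at_top[of 0] by eventually_elim (use assms in simp)
    from filterlim_inverse_at_top[OF large this]
    show "filterlim (\<lambda>n. \<beta>' n * real n ^ 2) at_top sequentially"
      by (simp add: mult.commute)
  qed
  show ?thesis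
    using part_i part_ii by blast
qed

end
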